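(* Let $\mathbf{B}$, $\mathbf{B}^*$, $\psi=\exists u_1\ldots\exists u_n\,\theta$, $\theta'$ and $\alpha$ be as in the context, and let $f\colon\{y_0,y_1,y_2,y_3\}\to B$ be a nontrivial assignment. Then $$\mathbf{B},f\models \exists x_0\ldots\exists x_3\,\exists w_0\ldots\exists w_3\,\exists u_1\ldots\exists u_n\,(\alpha\wedge\theta')$$ if and only if $\mathbf{B}^*\models\psi$.
   Context: The bowtie poset $\mathbf{B}$ has universe $B=\{0,1,2,3\}$ with order $0<1$, $0<3$, $2<1$, $2<3$ (plus reflexivity), and no other strict comparabilities. $\mathbf{B}^*$ is the structure over the vocabulary $\{\le,c_0,c_1,c_2,c_3\}$ ($c_i$ constant symbols) whose $\{\le\}$-reduct is $\mathbf{B}$ and with $c_i^{\mathbf{B}^*}=i$ for $i\in\{0,1,2,3\}$. $\psi=\exists u_1\ldots\exists u_n\,\theta$ is a sentence over $\{\le,c_0,\ldots,c_3\}$, where $\theta$ is a conjunction of atoms $t\le t'$ with $t,t'\in\{u_1,\dots,u_n,c_0,\dots,c_3\}$; $\theta'$ is obtained from $\theta$ by replacing each constant $c_i$ by the variable $w_i$. The variables $x_i,y_i,w_i$ ($i\in\{0,1,2,3\}$) are twelve fresh variables distinct from $u_1,\dots,u_n$. For sets of variables $S,S'$, $S\le S'$ abbreviates the conjunction of all atoms $s\le s'$ with $(s,s')\in S\times S'$. The formula $\alpha$ is $$\{w_0,w_2\}\le\{w_1,w_3\}\ \wedge\ \bigwedge_{j\in\{0,2\}}\{x_j\}\le\{y_j,w_j\}\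 \wedge\ \bigwedge_{j\in\{1,3\}}\{y_j,w_j\}\le\{x_j\}.$$ An assignment $f\colon\{y_0,y_1,y_2,y_3\}\to B$ is nontrivial if $\{f(y_0),f(y_2)\}=\{0,2\}$ and $\{f(y_1),f(y_3)\}=\{1,3\}$. *)

theory Defs
  imports Main
begin

definition bowtie :: "nat set" where
  "bowtie = {0,1,2,3}"

definition ble :: "nat \<Rightarrow> nat \<Rightarrow> bool" where
  "ble a b \<longleftrightarrow> a \<in> bowtie \<and> b \<in> bowtie \<and> (a = b \<or> (a \<in> {0,2} \<and> b \<in> {1,3}))"

text \<open>Terms of psi: a variable u_j or a constant symbol c_i.\<close>
datatype trm = TU nat | TC nat

datatype var = X nat | Y nat | W nat | U nat

text \<open>A conjunction of atoms t \<le> t' is represented as a list of pairs (t, t').\<close>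
type_synonym conj = "(trm \<times> trm) list"
type_synonym vconj = "(var \<times> var) list"

definition wf_theta :: "nat \<Rightarrow> conj \<Rightarrow> bool" where
  "wf_theta n \<theta> \<longleftrightarrow> (\<forall>(t, t') \<in> set \<theta>. \<forall>s \<in> {t, t'}.
      (\<forall>j. s = TU j \<longrightarrow> 1 \<le> j \<and> j \<le> n) \<and> (\<forall>i. s = TC i \<longrightarrow> i < 4))"

fun eval_trm :: "(nat \<Rightarrow> nat) \<Rightarrow> trm \<Rightarrow> nat" where
  "eval_trm g (TU j) = g j"
| "eval_trm g (TC i) = i"

definition Bstar_models :: "nat \<Rightarrow> conj \<Rightarrow> bool" where
  "Bstar_models n \<theta> \<longleftrightarrow> (\<exists>g. (\<forall>j \<in> {1..n}. g j \<in> bowtie) \<and>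
      (\<forall>(t, t') \<in> set \<theta>. ble (eval_trm g t) (eval_trm g t')))"

fun trm_to_var :: "trm \<Rightarrow> var" where
  "trm_to_var (TU j) = U j"
| "trm_to_var (TC i) = W i"

definition theta' :: "conj \<Rightarrow> vconj" where
  "theta' \<theta> = map (\<lambda>(t, t'). (trm_to_var t, trm_to_var t')) \<theta>"

definition alpha :: vconj where
  "alpha =
     [(W 0, W 1), (W 0, W 3), (W 2, W 1), (W 2, W 3),
      (X 0, Y 0), (X 0, W 0), (X 2, Y 2), (X 2, W 2),
      (Y 1, X 1), (W 1, X 1), (Y 3, X 3), (W 3, X 3)]"

definition B_models_ext :: "nat \<Rightarrow> (nat \<Rightarrow> nat) \<Rightarrow> conj \<Rightarrow> bool" where
  "B_models_ext n f \<theta> \<longleftrightarrow> (\<exists>h. (\<forall>i < 4. h (X i) \<in> bowtie \<and> h (W i) \<in> bowtie) \<and>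
      (\<forall>j \<in> {1..n}. h (U j) \<in> bowtie) \<and> (\<forall>i < 4. h (Y i) = f i) \<and>
      (\<forall>(a, b) \<in> set (alpha @ theta' \<theta>). ble (h a) (h b)))"

definition nontrivial :: "(nat \<Rightarrow> nat) \<Rightarrow> bool" where
  "nontrivial f \<longleftrightarrow> {f 0, f 2} = {0, 2} \<and> {f 1, f 3} = {1, 3}"

end

theory Submission imports Defs begin

(*
  Idea of the proof.  A nontrivial assignment f permutes {0,2} and {1,3}, so the
  map  swap f  (i \<mapsto> f i on the bowtie, identity elsewhere) is an involutive
  automorphism of the bowtie order.

  (1) Order-theoretic facts about the bowtie: transitivity, the only element below
      a minimal one is itself, and an element with two distinct upper bounds is
      minimal.  From these, alpha together with y_i = f i forces w_i = f i.
  (2) swap f preserves and reflects the order; hence, whenever each variable of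
      theta' is evaluated as swap f applied to the value of the corresponding term
      of theta, theta' holds iff theta holds.
  (3) Forward: w_i = f i by (1), and  u_j \<mapsto> swap f (h u_j)  satisfies theta by (2).
      Backward: from a model g of theta take x_i, y_i, w_i \<mapsto> f i and
      u_j \<mapsto> swap f (g j); alpha holds at f and theta' holds by (2).
*)

lemma ble_iff:
  "ble a b \<longleftrightarrow> (a, b) \<in> {(0,0),(1,1),(2,2),(3,3),(0,1),(0,3),(2,1),(2,3)}"
  unfolding ble_def bowtie_def by auto

text \<open>The bowtie has height one, so the order is transitive.\<close>
lemma ble_trans: "ble a b \<Longrightarrow> ble b c \<Longrightarrow> ble a c"
  unfolding ble_iff by auto

lemma ble_below_minimal: "ble a b \<Longrightarrow> b \<in> {0, 2} \<Longrightarrow> a = b"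
  unfolding ble_iff by auto

lemma ble_above_maximal: "ble a b \<Longrightarrow> a \<in> {1, 3} \<Longrightarrow> b = a"
  unfolding ble_iff by auto

lemma two_upper_bounds_minimal: "ble a c \<Longrightarrow> ble a e \<Longrightarrow> c \<noteq> e \<Longrightarrow> a \<in> {0, 2}"
  unfolding ble_iff by auto

lemma two_lower_bounds_maximal: "ble c a \<Longrightarrow> ble e a \<Longrightarrow> c \<noteq> e \<Longrightarrow> a \<in> {1, 3}"
  unfolding ble_iff by auto

lemma nontrivial_cases:
  assumes "nontrivial f"
  shows "(f 0 = 0 \<and> f 2 = 2 \<or> f 0 = 2 \<and> f 2 = 0) \<and> (f 1 = 1 \<and> f 3 = 3 \<or> f 1 = 3 \<and> f 3 = 1)"
  using assms unfolding nontrivial_def by (auto simp: doubleton_eq_iff)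

lemma nontrivial_shape:
  assumes "nontrivial f"
  shows "f 0 \<in> {0, 2}" "f 2 \<in> {0, 2}" "f 1 \<in> {1, 3}" "f 3 \<in> {1, 3}" "f 1 \<noteq> f 3" "f 0 \<noteq> f 2"
  using nontrivial_cases[OF assms] by auto

lemma alpha_holds_at:
  assumes "nontrivial f" and "\<And>i. h (X i) = f i" "\<And>i. h (Y i) = f i" "\<And>i. h (W i) = f i"
  shows "\<forall>(a, b) \<in> set alpha. ble (h a) (h b)"
  using nontrivial_cases[OF assms(1)] unfolding alpha_def
  by (elim disjE conjE; simp add: assms(2-4) ble_iff)

lemma alpha_forces_W:
  assumes nt: "nontrivial f"
    and y: "\<forall>i < 4. h (Y i) = f i"
    and \<alpha>: "\<forall>(a, b) \<in> set alpha. ble (h a) (h b)"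
  shows "\<forall>i < 4. h (W i) = f i"
proof -
  have a: "ble (h (W 0)) (h (W 1))" "ble (h (W 0)) (h (W 3))" "ble (h (W 2)) (h (W 1))"
    "ble (h (W 2)) (h (W 3))" "ble (h (X 0)) (h (Y 0))" "ble (h (X 0)) (h (W 0))"
    "ble (h (X 2)) (h (Y 2))" "ble (h (X 2)) (h (W 2))" "ble (h (Y 1)) (h (X 1))"
    "ble (h (W 1)) (h (X 1))" "ble (h (Y 3)) (h (X 3))" "ble (h (W 3)) (h (X 3))"
    using \<alpha> unfolding alpha_def by auto
  note f = nontrivial_shape[OF nt]
  have y: "h (Y 0) = f 0" "h (Y 1) = f 1" "h (Y 2) = f 2" "h (Y 3) = f 3"
    using y by auto
  text \<open>The x's are squeezed onto the extremal values of f.\<close>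
  have x: "h (X 0) = f 0" "h (X 2) = f 2" "h (X 1) = f 1" "h (X 3) = f 3"
    using ble_below_minimal[OF a(5)] ble_below_minimal[OF a(7)]
      ble_above_maximal[OF a(9)] ble_above_maximal[OF a(11)] y f by auto
  text \<open>Each w lies between f and two distinct values, hence equals f.\<close>
  have "h (W 0) \<in> {0, 2}"
    using two_upper_bounds_minimal[OF ble_trans[OF a(1) a(10)] ble_trans[OF a(2) a(12)]] x f
    by simp
  then have w0: "h (W 0) = f 0" using ble_below_minimal a(6) x by metis
  have "h (W 2) \<in> {0, 2}"
    using two_upper_bounds_minimal[OF ble_trans[OF a(3) a(10)] ble_trans[OF a(4) a(12)]] x f
    by simp
  then have w2: "h (W 2) = f 2" using ble_below_minimal a(8) x by metis
  have "h (W 1) \<in> {1, 3}"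
    using two_lower_bounds_maximal[OF ble_trans[OF a(6) a(1)] ble_trans[OF a(8) a(3)]] x f
    by simp
  then have w1: "h (W 1) = f 1" using ble_above_maximal a(10) x by metis
  have "h (W 3) \<in> {1, 3}"
    using two_lower_bounds_maximal[OF ble_trans[OF a(6) a(2)] ble_trans[OF a(8) a(4)]] x f
    by simp
  then have w3: "h (W 3) = f 3" using ble_above_maximal a(12) x by metis
  show ?thesis
  proof (intro allI impI)
    fix i :: nat assume "i < 4"
    then have "i = 0 \<or> i = 1 \<or> i = 2 \<or> i = 3" by auto
    then show "h (W i) = f i" using w0 w1 w2 w3 by auto
  qed
qed

text \<open>The extension of f to an involutive automorphism of the bowtie.\<close>
definition swap :: "(nat \<Rightarrow> nat) \<Rightarrow> nat \<Rightarrow> nat" where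
  "swap f x = (if x < 4 then f x else x)"

lemma swap_ble_iff:
  assumes "nontrivial f"
  shows "ble (swap f a) (swap f b) \<longleftrightarrow> ble a b"
proof -
  have "a = 0 \<or> a = 1 \<or> a = 2 \<or> a = 3 \<or> a \<ge> 4" "b = 0 \<or> b = 1 \<or> b = 2 \<or> b = 3 \<or> b \<ge> 4"
    by auto
  then show ?thesis using nontrivial_cases[OF assms] unfolding ble_iff swap_def
    by (elim disjE conjE; simp)
qed

lemma swap_involutive:
  assumes "nontrivial f"
  shows "swap f (swap f a) = a"
proof -
  have "a = 0 \<or> a = 1 \<or> a = 2 \<or> a = 3 \<or> a \<ge> 4" by auto
  then show ?thesis using nontrivial_cases[OF assms] unfolding swap_def
    by (elim disjE conjE; simp)
qed

lemma swap_bowtie: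
  assumes "nontrivial f" "a \<in> bowtie"
  shows "swap f a \<in> bowtie"
  using assms(2) nontrivial_shape[OF assms(1)] unfolding bowtie_def swap_def by auto

lemma term_correspondence:
  assumes "\<forall>i. s = TC i \<longrightarrow> i < 4"
    and "\<forall>i < 4. h (W i) = f i" and "\<And>j. h (U j) = swap f (g j)"
  shows "h (trm_to_var s) = swap f (eval_trm g s)"
  using assms by (cases s) (auto simp: swap_def)

lemma theta'_transfer:
  assumes nt: "nontrivial f" and wf: "wf_theta n \<theta>"
    and hW: "\<forall>i < 4. h (W i) = f i" and hU: "\<And>j. h (U j) = swap f (g j)"
  shows "(\<forall>(a, b) \<in> set (theta' \<theta>). ble (h a) (h b))
     \<longleftrightarrow> (\<forall>(t, t') \<in> set \<theta>. ble (eval_trm g t) (eval_trm g t'))"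
proof -
  have "h (trm_to_var s) = swap f (eval_trm g s)" if "(t, t') \<in> set \<theta>" "s \<in> {t, t'}" for t t' s
    using wf that term_correspondence[OF _ hW hU] unfolding wf_theta_def by fastforce
  then have "ble (h (trm_to_var t)) (h (trm_to_var t')) \<longleftrightarrow> ble (eval_trm g t) (eval_trm g t')"
    if "(t, t') \<in> set \<theta>" for t t'
    using that swap_ble_iff[OF nt] by simp
  then show ?thesis unfolding theta'_def by auto
qed

theorem claim4:
  fixes n :: nat and \<theta> :: conj and f :: "nat \<Rightarrow> nat"
  assumes "wf_theta n \<theta>"
    and "\<forall>i < 4. f i \<in> bowtie"
    and "nontrivial f"
  shows "B_models_ext n f \<theta> \<longleftrightarrow> Bstar_models n \<theta>"
proof
  assume "B_models_ext n f \<theta>"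
  then obtain h where hu: "\<forall>j \<in> {1..n}. h (U j) \<in> bowtie" and hy: "\<forall>i < 4. h (Y i) = f i"
    and h\<alpha>: "\<forall>(a, b) \<in> set alpha. ble (h a) (h b)"
    and h\<theta>: "\<forall>(a, b) \<in> set (theta' \<theta>). ble (h a) (h b)"
    unfolding B_models_ext_def by auto
  define g where "g j = swap f (h (U j))" for j
  have "h (U j) = swap f (g j)" for j
    by (simp add: g_def swap_involutive[OF assms(3)])
  then have "\<forall>(t, t') \<in> set \<theta>. ble (eval_trm g t) (eval_trm g t')"
    using h\<theta> theta'_transfer[OF assms(3,1) alpha_forces_W[OF assms(3) hy h\<alpha>]] by blast
  moreover have "\<forall>j \<in> {1..n}. g j \<in> bowtie"
    using hu swap_bowtie[OF assms(3)] by (simp add: g_def)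
  ultimately show "Bstar_models n \<theta>"
    unfolding Bstar_models_def by blast
next
  assume "Bstar_models n \<theta>"
  then obtain g where gb: "\<forall>j \<in> {1..n}. g j \<in> bowtie"
    and g\<theta>: "\<forall>(t, t') \<in> set \<theta>. ble (eval_trm g t) (eval_trm g t')"
    unfolding Bstar_models_def by blast
  define h where "h v = (case v of X i \<Rightarrow> f i | Y i \<Rightarrow> f i | W i \<Rightarrow> f i | U j \<Rightarrow> swap f (g j))" for v
  have "\<forall>i < 4. h (W i) = f i" "h (U j) = swap f (g j)" for j
    by (simp_all add: h_def)
  then have "\<forall>(a, b) \<in> set (theta' \<theta>). ble (h a) (h b)"
    using g\<theta> theta'_transfer[OF assms(3,1)] by blast
  moreover have "\<forall>(a, b) \<in> set alpha. ble (h a) (h b)"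
    by (rule alpha_holds_at[OF assms(3)]) (simp_all add: h_def)
  ultimately show "B_models_ext n f \<theta>"
    using assms(2) gb swap_bowtie[OF assms(3)] unfolding B_models_ext_def
    by (intro exI[of _ h]) (auto simp: h_def)
qed

end
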